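(* Let $\mathcal{P}\subseteq\mathcal{S}\subseteq\mathcal{T}$ be group properties. If for every $G\in\mathcal{S}$ there exists $H\in\mathcal{P}$ such that the group $(\mathbb{N},G)$ embeds (as a group) into $(\mathbb{N},H)$, then $\mathcal{P}$ is dense in $\mathcal{S}$.
   Context: Let $\mathbb{N}^{\mathbb{N}\times\mathbb{N}}$ be the space of functions $\mathbb{N}\times\mathbb{N}\to\mathbb{N}$ with the product of discrete topologies. Let $\mathcal{A}=\{G\in\mathbb{N}^{\mathbb{N}\times\mathbb{N}}: G \text{ is an abelian group operation on } \mathbb{N} \text{ with identity element } 0\}$ and $\mathcal{T}=\{G\in\mathcal{A}: (\mathbb{N},G)\text{ is torsion-free}\}$, with the subspace topology. A set $\mathcal{P}\subseteq\mathcal{T}$ is a group property if it is isomorphism invariant: for any $G\in\mathcal{T}$, if $(\mathbb{N},G)$ is isomorphic to $(\mathbb{N},H)$ for some $H\in\mathcal{P}$, then $G\in\mathcal{P}$. *)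

theory Defs
  imports "HOL-Analysis.Analysis" "HOL-Algebra.Group"
begin

text \<open>The structure (N, G) for a binary operation G : N x N -> N, with identity 0.
  The ambient space nat \<times> nat \<Rightarrow> nat carries the product topology
  (Function_Topology) of the discrete topology on nat.\<close>

definition grp :: "(nat \<times> nat \<Rightarrow> nat) \<Rightarrow> nat monoid" where
  "grp G = \<lparr>carrier = UNIV, monoid.mult = (\<lambda>a b. G (a, b)), one = 0\<rparr>"

definition AbGrp :: "(nat \<times> nat \<Rightarrow> nat) set" where
  "AbGrp = {G. comm_group (grp G)}"

definition torsion_free :: "('a, 'b) monoid_scheme \<Rightarrow> bool" where
  "torsion_free M \<longleftrightarrow>
     (\<forall>x\<in>carrier M. \<forall>n::nat. n > 0 \<longrightarrow> x [^]\<^bsub>M\<^esub> n = \<one>\<^bsub>M\<^esub> \<longrightarrow> x = \<one>\<^bsub>M\<^esub>)"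

definition TF :: "(nat \<times> nat \<Rightarrow> nat) set" where
  "TF = {G \<in> AbGrp. torsion_free (grp G)}"

definition group_property :: "(nat \<times> nat \<Rightarrow> nat) set \<Rightarrow> bool" where
  "group_property P \<longleftrightarrow> P \<subseteq> TF \<and>
     (\<forall>G\<in>TF. \<forall>H\<in>P. grp G \<cong> grp H \<longrightarrow> G \<in> P)"

definition embeds :: "('a, 'c) monoid_scheme \<Rightarrow> ('b, 'd) monoid_scheme \<Rightarrow> bool" where
  "embeds M N \<longleftrightarrow> (\<exists>h. h \<in> hom M N \<and> inj_on h (carrier M))"

text \<open>P dense in S w.r.t. the subspace topology on S: every point of S lies in the
  closure of P (closure taken in the product space; closure in S is this intersected with S).\<close>

end

theory Submission
  imports Defs
begin

text \<open>A basic open set of the product topology constrains only finitely many entries of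
  the operation table, so it suffices to match the table of \<open>G\<close> on a finite set \<open>F\<close> of
  pairs by an operation in \<open>P\<close>. Take \<open>H \<in> P\<close> with an embedding \<open>h\<close> of \<open>G\<close> into \<open>H\<close>, and
  extend \<open>h\<close>, restricted to the finitely many elements occurring in \<open>F\<close> (together with \<open>0\<close>),
  to a permutation \<open>\<sigma>\<close> of \<open>\<nat>\<close>. Transporting \<open>H\<close> along \<open>\<sigma>\<close> gives an isomorphic torsion-free
  group, hence one in \<open>P\<close>, and on \<open>F\<close> its table agrees with that of \<open>G\<close>.\<close>

lemma closure_fun_if_finite_agreement:
  fixes f :: "'a \<Rightarrow> 'b::topological_space"
  assumes "\<And>F. finite F \<Longrightarrow> \<exists>g\<in>P. \<forall>x\<in>F. g x = f x"
  shows "f \<in> closure P"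
  unfolding closure_iff_nhds_not_empty
proof (intro allI impI)
  fix U V assume "V \<subseteq> U" and "open V" and "f \<in> V"
  then obtain X where fX: "f \<in> (\<Pi>\<^sub>E i\<in>UNIV. X i)"
    and fin: "finite {i. X i \<noteq> topspace euclidean}" and XV: "(\<Pi>\<^sub>E i\<in>UNIV. X i) \<subseteq> V"
    using product_topology_open_contains_basis[of "\<lambda>_. euclidean" UNIV V f]
    by (auto simp: open_fun_def)
  obtain g where "g \<in> P" and agree: "\<forall>i\<in>{i. X i \<noteq> UNIV}. g i = f i"
    using assms[of "{i. X i \<noteq> UNIV}"] fin by auto
  have "g i \<in> X i" for i
    using fX agree by (cases "X i = UNIV") auto
  then have "g \<in> (\<Pi>\<^sub>E i\<in>UNIV. X i)" by auto
  then show "P \<inter> U \<noteq> {}" using XV \<open>V \<subseteq> U\<close> \<open>g \<in> P\<close> by blast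
qed

lemma inj_on_finite_extends_to_bij:
  fixes h :: "'a \<Rightarrow> 'a"
  assumes "finite A" and "inj_on h A"
  shows "\<exists>\<sigma>. bij \<sigma> \<and> (\<forall>x\<in>A. \<sigma> x = h x)"
proof -
  define B where "B = h ` A"
  have hAB: "bij_betw h A B" using assms(2) by (simp add: B_def bij_betw_def)
  have "finite B" using assms(1) by (simp add: B_def)
  moreover have "card (B - A) = card (A - B)"
    using assms \<open>finite B\<close> hAB
    by (metis bij_betw_same_card card_Diff_subset_Int finite_Int Int_commute)
  ultimately obtain \<tau> where \<tau>: "bij_betw \<tau> (B - A) (A - B)"
    using assms(1) finite_same_card_bij by (meson finite_Diff)
  define \<sigma> where "\<sigma> x = (if x \<in> A \<union> B then (if x \<in> A then h x else \<tau> x) else x)" for x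
  have "bij_betw (\<lambda>x. if x \<in> A then h x else \<tau> x) (A \<union> (B - A)) (B \<union> (A - B))"
    using bij_betw_disjoint_Un[OF hAB \<tau>] by blast
  then have "bij_betw (\<lambda>x. if x \<in> A then h x else \<tau> x) (A \<union> B) (A \<union> B)"
    by (simp add: Un_commute)
  from bij_betw_disjoint_Un[OF this bij_betw_id Compl_disjoint Compl_disjoint]
  have "bij_betw \<sigma> (A \<union> B \<union> - (A \<union> B)) (A \<union> B \<union> - (A \<union> B))"
    by (simp add: \<sigma>_def[abs_def] cong: if_cong)
  then have "bij \<sigma>" unfolding Compl_partition .
  then show ?thesis by (auto simp: \<sigma>_def)
qed

lemma torsion_free_inj_hom:
  assumes "group M" and "group N" and h: "h \<in> hom M N" and inj: "inj_on h (carrier M)"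
    and "torsion_free N"
  shows "torsion_free M"
  unfolding torsion_free_def
proof (intro ballI allI impI)
  fix x and n :: nat assume x: "x \<in> carrier M" and "n > 0" and "x [^]\<^bsub>M\<^esub> n = \<one>\<^bsub>M\<^esub>"
  then have "h x [^]\<^bsub>N\<^esub> n = \<one>\<^bsub>N\<^esub>"
    using hom_nat_pow[OF h x] hom_one[OF h] assms(1,2) by metis
  then have "h x = h \<one>\<^bsub>M\<^esub>"
    using \<open>torsion_free N\<close> \<open>n > 0\<close> hom_one[OF h] assms(1,2) h x
    by (auto simp: torsion_free_def hom_def)
  then show "x = \<one>\<^bsub>M\<^esub>"
    using inj x monoid.one_closed[OF group.is_monoid[OF assms(1)]] by (auto dest: inj_onD)
qed

definition pullback_op :: "(nat \<Rightarrow> nat) \<Rightarrow> (nat \<times> nat \<Rightarrow> nat) \<Rightarrow> nat \<times> nat \<Rightarrow> nat" where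
  "pullback_op \<sigma> H = (\<lambda>(x, y). inv_into UNIV \<sigma> (H (\<sigma> x, \<sigma> y)))"

lemma bij_iso_pullback_op:
  assumes "bij \<sigma>"
  shows "\<sigma> \<in> iso (grp (pullback_op \<sigma> H)) (grp H)"
  using assms by (auto simp: iso_def hom_def grp_def pullback_op_def bij_is_surj surj_f_inv_f)

lemma inv_iso_pullback_op:
  assumes "bij \<sigma>"
  shows "inv_into UNIV \<sigma> \<in> iso (grp H) (grp (pullback_op \<sigma> H))"
  using assms bij_imp_bij_inv[OF assms]
  by (auto simp: iso_def hom_def grp_def pullback_op_def bij_is_surj bij_is_inj surj_f_inv_f)

lemma pullback_op_in_TF:
  assumes H: "H \<in> TF" and "bij \<sigma>" and "\<sigma> 0 = 0"
  shows "pullback_op \<sigma> H \<in> TF"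
proof -
  have cH: "comm_group (grp H)" and "torsion_free (grp H)"
    using H by (auto simp: TF_def AbGrp_def)
  have "inv_into UNIV \<sigma> 0 = 0" using \<open>bij \<sigma>\<close> \<open>\<sigma> 0 = 0\<close> by (metis bij_is_inj inv_f_f)
  then have "comm_group (grp (pullback_op \<sigma> H))"
    using comm_group.iso_imp_img_comm_group[OF cH inv_iso_pullback_op[OF \<open>bij \<sigma>\<close>]]
    by (simp add: grp_def)
  moreover have "torsion_free (grp (pullback_op \<sigma> H))"
  proof (rule torsion_free_inj_hom)
    show "group (grp (pullback_op \<sigma> H))" using calculation by (rule comm_group.axioms(2))
    show "group (grp H)" using cH by (rule comm_group.axioms(2))
    show "\<sigma> \<in> hom (grp (pullback_op \<sigma> H)) (grp H)"
      using bij_iso_pullback_op[OF \<open>bij \<sigma>\<close>] by (simp add: iso_def)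
    show "inj_on \<sigma> (carrier (grp (pullback_op \<sigma> H)))"
      using \<open>bij \<sigma>\<close> by (simp add: bij_is_inj grp_def)
  qed fact
  ultimately show ?thesis by (simp add: TF_def AbGrp_def)
qed

lemma group_property_pullback_op:
  assumes "group_property P" and "H \<in> P" and "bij \<sigma>" and "\<sigma> 0 = 0"
  shows "pullback_op \<sigma> H \<in> P"
proof -
  have "pullback_op \<sigma> H \<in> TF"
    using assms by (intro pullback_op_in_TF) (auto simp: group_property_def)
  moreover have "grp (pullback_op \<sigma> H) \<cong> grp H"
    using bij_iso_pullback_op[OF \<open>bij \<sigma>\<close>] by (auto simp: is_iso_def)
  ultimately show ?thesis using assms(1,2) by (auto simp: group_property_def)
qed

lemma embeds_finitely_approximated:
  assumes P: "group_property P" and G: "group (grp G)" and "H \<in> P"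
    and "embeds (grp G) (grp H)" and "finite F"
  shows "\<exists>H'\<in>P. \<forall>p\<in>F. H' p = G p"
proof -
  obtain h where h: "h \<in> hom (grp G) (grp H)" and "inj h"
    using \<open>embeds (grp G) (grp H)\<close> by (auto simp: embeds_def grp_def)
  have "group (grp H)"
    using P \<open>H \<in> P\<close> by (auto simp: group_property_def TF_def AbGrp_def comm_group_def)
  then have "h 0 = 0" using hom_one[OF h G] by (simp add: grp_def)
  have hmult: "h (G (a, b)) = H (h a, h b)" for a b using h by (auto simp: hom_def grp_def)
  define A where "A = insert 0 (fst ` F \<union> snd ` F \<union> G ` F)"
  have "finite A" using \<open>finite F\<close> by (simp add: A_def)
  moreover have "inj_on h A" using \<open>inj h\<close> by (rule inj_on_subset) simp
  ultimately obtain \<sigma> where "bij \<sigma>" and \<sigma>h: "\<forall>x\<in>A. \<sigma> x = h x"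
    using inj_on_finite_extends_to_bij by blast
  have "pullback_op \<sigma> H \<in> P"
    using group_property_pullback_op[OF P \<open>H \<in> P\<close> \<open>bij \<sigma>\<close>] \<sigma>h \<open>h 0 = 0\<close> by (simp add: A_def)
  moreover have "pullback_op \<sigma> H p = G p" if "p \<in> F" for p
  proof (cases p)
    case (Pair a b)
    have "a \<in> A" "b \<in> A" "G (a, b) \<in> A"
      using that Pair unfolding A_def by force+
    then have "H (\<sigma> a, \<sigma> b) = \<sigma> (G (a, b))" using \<sigma>h hmult by simp
    then show ?thesis using \<open>bij \<sigma>\<close> Pair by (simp add: pullback_op_def bij_is_inj)
  qed
  ultimately show ?thesis by metis
qed

theorem lemma2p8:
  fixes P S :: "(nat \<times> nat \<Rightarrow> nat) set"
  assumes "group_property P" and "group_property S" and "P \<subseteq> S"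
    and "\<forall>G\<in>S. \<exists>H\<in>P. embeds (grp G) (grp H)"
  shows "S \<subseteq> closure P"
proof
  fix G assume "G \<in> S"
  then have "group (grp G)"
    using assms(2) by (auto simp: group_property_def TF_def AbGrp_def comm_group_def)
  obtain H where "H \<in> P" and "embeds (grp G) (grp H)" using assms(4) \<open>G \<in> S\<close> by blast
  show "G \<in> closure P"
    by (rule closure_fun_if_finite_agreement)
       (auto intro: embeds_finitely_approximated[OF assms(1) \<open>group (grp G)\<close> \<open>H \<in> P\<close>
                       \<open>embeds (grp G) (grp H)\<close>])
qed

end
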